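(* For any $d\in\mathbb{Z}_{\ge0}$ and $\varepsilon\in(0,1/2)$, there are $\rho_0,\dots,\rho_d\in[0,1-\varepsilon]$ and $c_0,\dots,c_d\in\mathbb{R}$ such that: (1) $\sum_{j=0}^dc_j\rho_j^k=1$ for $k=0,1,\dots,d$; (2) $0\le\sum_{j=0}^dc_j\rho_j^k\le1$ for all integers $k\ge d+1$; (3) $\sum_{j=0}^d|c_j|\le 2^{O(d\sqrt{\varepsilon})}$, where the implied constant is absolute. *)

theory Defs
  imports Complex_Main
begin

end

theory Submission
  imports Defs "HOL-Computational_Algebra.Polynomial"
begin

(* Take for the nodes \<rho>_j the extrema cos(j pi/d) of the Chebyshev polynomial T_d, moved
   affinely from [-1,1] onto [0,1-\<epsilon>], and let c_j be the Lagrange basis polynomials of these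
   nodes evaluated at 1. Exactness of interpolation on polynomials of degree at most d gives (1).
   The moments a_k = sum c_j \<rho>_j^k satisfy a_k - a_(k+1) = prod_j (1 - \<rho>_j) [\<rho>_0,...,\<rho>_d] x^k,
   and a divided difference of a monomial at nonnegative nodes is nonnegative; so a_k decreases
   from a_d = 1 to its limit 0, which is (2). Since T_d alternates in sign at its extrema,
   |c_j| = (-1)^j c_j, so sum |c_j| is the value at 1 of the interpolant of the rescaled T_d,
   namely T_d(2/(1-\<epsilon>) - 1) = cosh (d arcosh (1 + O(\<epsilon>))) = exp (O(d sqrt \<epsilon>)), which is (3). *)

definition lagrange_basis :: "(nat \<Rightarrow> real) \<Rightarrow> nat set \<Rightarrow> real \<Rightarrow> nat \<Rightarrow> real" where
  "lagrange_basis \<rho> I x j = (\<Prod>i\<in>I-{j}. (x - \<rho> i)) / (\<Prod>i\<in>I-{j}. (\<rho> j - \<rho> i))"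

definition interpolant :: "(nat \<Rightarrow> real) \<Rightarrow> nat set \<Rightarrow> (nat \<Rightarrow> real) \<Rightarrow> real poly" where
  "interpolant \<rho> I y =
     (\<Sum>j\<in>I. smult (y j / (\<Prod>i\<in>I-{j}. (\<rho> j - \<rho> i))) (\<Prod>i\<in>I-{j}. [:- \<rho> i, 1:]))"

lemma poly_interpolant: "poly (interpolant \<rho> I y) x = (\<Sum>j\<in>I. lagrange_basis \<rho> I x j * y j)"
  by (simp add: interpolant_def lagrange_basis_def poly_sum poly_prod mult.commute)

lemma
  assumes "finite A"
  shows degree_prod_linear: "degree (\<Prod>i\<in>A. [:- (\<rho> i::real), 1:]) = card A"
    and lead_coeff_prod_linear: "lead_coeff (\<Prod>i\<in>A. [:- (\<rho> i::real), 1:]) = 1"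
  by (simp add: degree_prod_eq_sum_degree, subst lead_coeff_prod, simp)

lemma degree_interpolant:
  assumes "finite I"
  shows "degree (interpolant \<rho> I y) \<le> card I - 1"
  unfolding interpolant_def
proof (rule degree_sum_le[OF assms])
  fix j assume "j \<in> I"
  with assms have "degree (\<Prod>i\<in>I-{j}. [:-\<rho> i,1:]) = card I - 1"
    by (simp add: degree_prod_linear)
  then show "degree (smult (y j / (\<Prod>i\<in>I-{j}. (\<rho> j - \<rho> i))) (\<Prod>i\<in>I-{j}. [:-\<rho> i,1:])) \<le> card I - 1"
    by (metis degree_smult_le)
qed

lemma coeff_interpolant_top:
  assumes "finite I"
  shows "coeff (interpolant \<rho> I y) (card I - 1) = (\<Sum>j\<in>I. y j / (\<Prod>i\<in>I-{j}. (\<rho> j - \<rho> i)))"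
  unfolding interpolant_def coeff_sum
proof (intro sum.cong refl)
  fix j assume "j \<in> I"
  with assms have "coeff (\<Prod>i\<in>I-{j}. [:-\<rho> i,1:]) (card I - 1) = 1"
    using lead_coeff_prod_linear[of "I-{j}" \<rho>] by (simp add: degree_prod_linear)
  then show "coeff (smult (y j / (\<Prod>i\<in>I-{j}. (\<rho> j - \<rho> i))) (\<Prod>i\<in>I-{j}. [:-\<rho> i,1:])) (card I - 1)
      = y j / (\<Prod>i\<in>I-{j}. (\<rho> j - \<rho> i))"
    by simp
qed

lemma lagrange_basis_at_node:
  assumes "finite I" "inj_on \<rho> I" "j \<in> I" "m \<in> I"
  shows "lagrange_basis \<rho> I (\<rho> m) j = (if j = m then 1 else 0)"
proof -
  have "(\<Prod>i\<in>I-{j}. (\<rho> j - \<rho> i)) \<noteq> 0"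
    using assms by (auto simp: inj_on_def)
  then show ?thesis
    using assms by (auto simp: lagrange_basis_def)
qed

lemma interpolant_poly:
  assumes "finite I" "inj_on \<rho> I" "degree p < card I"
  shows "interpolant \<rho> I (\<lambda>j. poly p (\<rho> j)) = p"
proof (rule poly_eqI_degree[of "\<rho> ` I"])
  fix x assume "x \<in> \<rho> ` I"
  then obtain m where "m \<in> I" "x = \<rho> m" by blast
  with assms have "(\<Sum>j\<in>I. lagrange_basis \<rho> I x j * poly p (\<rho> j))
      = (\<Sum>j\<in>I. if j = m then poly p (\<rho> j) else 0)"
    by (intro sum.cong) (simp_all add: lagrange_basis_at_node)
  with \<open>m \<in> I\<close> \<open>x = \<rho> m\<close> assms(1)
  show "poly (interpolant \<rho> I (\<lambda>j. poly p (\<rho> j))) x = poly p x"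
    by (simp add: poly_interpolant)
next
  show "degree (interpolant \<rho> I (\<lambda>j. poly p (\<rho> j))) < card (\<rho> ` I)"
    using degree_interpolant[OF assms(1), of \<rho> "\<lambda>j. poly p (\<rho> j)"] assms
    by (simp add: card_image)
qed (use assms in \<open>simp add: card_image\<close>)

lemma lagrange_interpolation:
  assumes "finite I" "inj_on \<rho> I" "degree p < card I"
  shows "(\<Sum>j\<in>I. lagrange_basis \<rho> I x j * poly p (\<rho> j)) = poly p x"
  using poly_interpolant[of \<rho> I "\<lambda>j. poly p (\<rho> j)" x] by (simp add: interpolant_poly[OF assms])

lemma lagrange_interpolation_power:
  assumes "finite I" "inj_on \<rho> I" "k < card I"
  shows "(\<Sum>j\<in>I. lagrange_basis \<rho> I x j * \<rho> j ^ k) = x ^ k"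
  using lagrange_interpolation[OF assms(1,2), of "monom 1 k" x] assms(3)
  by (simp add: poly_monom degree_monom_eq)

definition divided_diff_power :: "(nat \<Rightarrow> real) \<Rightarrow> nat set \<Rightarrow> nat \<Rightarrow> real" where
  "divided_diff_power \<rho> I k = (\<Sum>j\<in>I. \<rho> j ^ k / (\<Prod>i\<in>I-{j}. (\<rho> j - \<rho> i)))"

lemma divided_diff_power_eq_0:
  assumes "finite I" "inj_on \<rho> I" "Suc k < card I"
  shows "divided_diff_power \<rho> I k = 0"
proof -
  have "divided_diff_power \<rho> I k = coeff (interpolant \<rho> I (\<lambda>j. poly (monom 1 k) (\<rho> j))) (card I - 1)"
    unfolding coeff_interpolant_top[OF assms(1)] by (simp add: divided_diff_power_def poly_monom)
  also have "\<dots> = coeff (monom 1 k) (card I - 1)"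
    using assms by (simp add: interpolant_poly degree_monom_eq)
  also have "\<dots> = 0"
    using assms(3) by (simp add: coeff_monom)
  finally show ?thesis .
qed

lemma divided_diff_power_insert_Suc:
  assumes "finite I" "a \<notin> I" "inj_on \<rho> (insert a I)"
  shows "divided_diff_power \<rho> (insert a I) (Suc k)
    = \<rho> a * divided_diff_power \<rho> (insert a I) k + divided_diff_power \<rho> I k"
proof -
  define w where "w j = (\<Prod>i\<in>I-{j}. (\<rho> j - \<rho> i))" for j
  have remove_a: "insert a I - {a} = I" and remove_j: "\<And>j. j \<in> I \<Longrightarrow> insert a I - {j} = insert a (I - {j})"
    using assms(2) by auto
  have "\<rho> j ^ Suc k / ((\<rho> j - \<rho> a) * w j) = \<rho> a * (\<rho> j ^ k / ((\<rho> j - \<rho> a) * w j)) + \<rho> j ^ k / w j"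
    if "j \<in> I" for j
  proof -
    have "\<rho> j \<noteq> \<rho> a" using assms that by (auto simp: inj_on_def)
    then show ?thesis by (cases "w j = 0") (simp_all add: field_simps)
  qed
  then show ?thesis
    using assms(1,2)
    by (simp add: divided_diff_power_def remove_a remove_j w_def[symmetric] sum.distrib sum_distrib_left
        algebra_simps cong: sum.cong)
qed

lemma divided_diff_power_nonneg:
  assumes "finite I" "inj_on \<rho> I" "\<forall>i\<in>I. 0 \<le> \<rho> i"
  shows "0 \<le> divided_diff_power \<rho> I k"
  using assms
proof (induction I arbitrary: k rule: finite_induct)
  case empty
  then show ?case by (simp add: divided_diff_power_def)
next
  case (insert a I)
  have IH: "0 \<le> divided_diff_power \<rho> I m" for m
    using insert by (auto intro: inj_on_subset)
  show ?case
  proof (induction k)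
    case 0
    show ?case
    proof (cases "I = {}")
      case True
      then show ?thesis by (simp add: divided_diff_power_def)
    next
      case False
      with insert have "divided_diff_power \<rho> (insert a I) 0 = 0"
        by (intro divided_diff_power_eq_0) (auto simp: card_gt_0_iff)
      then show ?thesis by simp
    qed
  next
    case (Suc k)
    then show ?case
      using divided_diff_power_insert_Suc[OF insert(1,2) insert.prems(1)] IH insert.prems(2) by simp
  qed
qed

lemma lagrange_moment_step:
  assumes "finite I"
  shows "x * (\<Sum>j\<in>I. lagrange_basis \<rho> I x j * \<rho> j ^ m) - (\<Sum>j\<in>I. lagrange_basis \<rho> I x j * \<rho> j ^ Suc m)
    = (\<Prod>i\<in>I. (x - \<rho> i)) * divided_diff_power \<rho> I m"
proof -
  have "x * (lagrange_basis \<rho> I x j * \<rho> j ^ m) - lagrange_basis \<rho> I x j * \<rho> j ^ Suc m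
      = (\<Prod>i\<in>I. (x - \<rho> i)) * (\<rho> j ^ m / (\<Prod>i\<in>I-{j}. (\<rho> j - \<rho> i)))" if "j \<in> I" for j
    using assms that by (simp add: lagrange_basis_def prod.remove algebra_simps)
  then show ?thesis
    by (simp add: divided_diff_power_def sum_distrib_left flip: sum_subtractf)
qed

lemma lagrange_moments_at_one_bounded:
  assumes "finite I" "I \<noteq> {}" "inj_on \<rho> I" "\<forall>i\<in>I. 0 \<le> \<rho> i \<and> \<rho> i < 1" "card I - 1 \<le> k"
  shows "0 \<le> (\<Sum>j\<in>I. lagrange_basis \<rho> I 1 j * \<rho> j ^ k)"
    and "(\<Sum>j\<in>I. lagrange_basis \<rho> I 1 j * \<rho> j ^ k) \<le> 1"
proof -
  define a where "a k = (\<Sum>j\<in>I. lagrange_basis \<rho> I 1 j * \<rho> j ^ k)" for k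
  have "decseq a"
  proof (rule decseq_SucI)
    fix m
    have "a m - a (Suc m) = (\<Prod>i\<in>I. (1 - \<rho> i)) * divided_diff_power \<rho> I m"
      using lagrange_moment_step[OF assms(1), of 1 \<rho> m] by (simp add: a_def)
    also have "\<dots> \<ge> 0"
      using assms divided_diff_power_nonneg[OF assms(1,3), of m]
      by (intro mult_nonneg_nonneg prod_nonneg) auto
    finally show "a (Suc m) \<le> a m" by simp
  qed
  have "a (card I - 1) = 1"
    using assms lagrange_interpolation_power[OF assms(1,3), of "card I - 1" 1]
    by (simp add: a_def card_gt_0_iff)
  with \<open>decseq a\<close> assms(5) show "a k \<le> 1"
    by (metis decseqD)
  have "a \<longlonglongrightarrow> 0"
    unfolding a_def using assms(4)
    by (intro tendsto_null_sum tendsto_mult_right_zero LIMSEQ_power_zero) auto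
  with \<open>decseq a\<close> show "0 \<le> a k"
    by (rule decseq_ge)
qed

lemma abs_lagrange_basis_alternating:
  assumes "strict_antimono_on {0..d} \<rho>" "\<rho> 0 < x" "j \<le> d"
  shows "\<bar>lagrange_basis \<rho> {0..d} x j\<bar> = (-1) ^ j * lagrange_basis \<rho> {0..d} x j"
proof -
  have decr: "\<rho> b < \<rho> a" if "a < b" "b \<le> d" for a b
    using assms(1) that by (simp add: monotone_on_def)
  have below_x: "\<rho> i < x" if "i \<le> d" for i
    using decr[of 0 i] assms(2) that by (cases "i = 0") auto
  have split: "{0..d} - {j} = {0..<j} \<union> {Suc j..d}"
    using assms(3) by auto
  have "(\<Prod>i\<in>{0..d}-{j}. (\<rho> j - \<rho> i))
      = (-1) ^ j * ((\<Prod>i\<in>{0..<j}. (\<rho> i - \<rho> j)) * (\<Prod>i\<in>{Suc j..d}. (\<rho> j - \<rho> i)))"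
  proof -
    have "(\<Prod>i\<in>{0..<j}. (\<rho> j - \<rho> i)) = (\<Prod>i\<in>{0..<j}. (-1) * (\<rho> i - \<rho> j))"
      by simp
    also have "\<dots> = (-1) ^ j * (\<Prod>i\<in>{0..<j}. (\<rho> i - \<rho> j))"
      by (simp only: prod.distrib prod_constant card_atLeastLessThan) simp
    finally have "(\<Prod>i\<in>{0..<j}. (\<rho> j - \<rho> i)) = (-1) ^ j * (\<Prod>i\<in>{0..<j}. (\<rho> i - \<rho> j))" .
    moreover have "(\<Prod>i\<in>{0..<j} \<union> {Suc j..d}. (\<rho> j - \<rho> i))
        = (\<Prod>i\<in>{0..<j}. (\<rho> j - \<rho> i)) * (\<Prod>i\<in>{Suc j..d}. (\<rho> j - \<rho> i))"
      by (rule prod.union_disjoint) auto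
    ultimately show ?thesis
      by (simp add: split)
  qed
  moreover have "0 < (\<Prod>i\<in>{0..<j}. (\<rho> i - \<rho> j)) * (\<Prod>i\<in>{Suc j..d}. (\<rho> j - \<rho> i))"
    using assms(3) decr by (intro mult_pos_pos prod_pos) auto
  moreover have "0 < (\<Prod>i\<in>{0..d}-{j}. (x - \<rho> i))"
    using below_x by (intro prod_pos) auto
  ultimately have "0 \<le> (-1) ^ j * lagrange_basis \<rho> {0..d} x j"
    by (auto simp: lagrange_basis_def)
  moreover have "\<bar>lagrange_basis \<rho> {0..d} x j\<bar> = \<bar>(-1) ^ j * lagrange_basis \<rho> {0..d} x j\<bar>"
    by (simp add: abs_mult)
  ultimately show ?thesis
    by simp
qed

lemma sum_abs_lagrange_basis:
  assumes "strict_antimono_on {0..d} \<rho>" "\<rho> 0 < x" "degree p \<le> d"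
    and "\<And>j. j \<le> d \<Longrightarrow> poly p (\<rho> j) = (-1) ^ j"
  shows "(\<Sum>j=0..d. \<bar>lagrange_basis \<rho> {0..d} x j\<bar>) = poly p x"
proof -
  have "inj_on \<rho> {0..d}"
    using assms(1) strict_antimono_iff_antimono by blast
  have "(\<Sum>j=0..d. \<bar>lagrange_basis \<rho> {0..d} x j\<bar>) = (\<Sum>j=0..d. lagrange_basis \<rho> {0..d} x j * poly p (\<rho> j))"
    by (intro sum.cong) (simp_all add: abs_lagrange_basis_alternating[OF assms(1,2)] assms(4))
  also have "\<dots> = poly p x"
    using \<open>inj_on \<rho> {0..d}\<close> assms(3) by (intro lagrange_interpolation) auto
  finally show ?thesis .
qed

fun cheb_poly :: "nat \<Rightarrow> real poly" where
  "cheb_poly 0 = 1"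
| "cheb_poly (Suc 0) = [:0, 1:]"
| "cheb_poly (Suc (Suc n)) = [:0, 2:] * cheb_poly (Suc n) - cheb_poly n"

lemma degree_cheb_poly: "degree (cheb_poly n) \<le> n"
proof (induction n rule: cheb_poly.induct)
  case (3 n)
  have "degree ([:0, 2:] * cheb_poly (Suc n)) \<le> Suc (Suc n)"
    using degree_mult_le[of "[:0, 2:]" "cheb_poly (Suc n)"] 3(1) by simp
  then show ?case
    using 3(2) by (simp add: degree_diff_le)
qed auto

lemma poly_cheb_poly_cos: "poly (cheb_poly n) (cos x) = cos (real n * x)"
proof (induction n rule: cheb_poly.induct)
  case (3 n)
  have "cos (real (Suc n) * x + x) + cos (real (Suc n) * x - x) = 2 * cos x * cos (real (Suc n) * x)"
    by (simp add: cos_add cos_diff)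
  then show ?case
    using 3 by (simp add: algebra_simps)
qed auto

lemma poly_cheb_poly_cosh: "poly (cheb_poly n) (cosh x) = cosh (real n * x)"
proof (induction n rule: cheb_poly.induct)
  case (3 n)
  have "cosh (real (Suc n) * x + x) + cosh (real (Suc n) * x - x) = 2 * cosh x * cosh (real (Suc n) * x)"
    by (simp add: cosh_add cosh_diff)
  then show ?case
    using 3 by (simp add: algebra_simps)
qed auto

lemma poly_cheb_poly_le_exp_arcosh:
  assumes "1 \<le> x"
  shows "poly (cheb_poly n) x \<le> exp (real n * arcosh x)"
proof -
  have "0 \<le> real n * arcosh x"
    using assms by simp
  then have "cosh (real n * arcosh x) \<le> exp (real n * arcosh x)"
    by (simp add: cosh_field_def)
  then show ?thesis
    using poly_cheb_poly_cosh[of n "arcosh x"] assms by simp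
qed

(* For d = 0 the division by zero makes the single node 1 - \<epsilon>. *)
definition cheb_node :: "real \<Rightarrow> nat \<Rightarrow> nat \<Rightarrow> real" where
  "cheb_node \<epsilon> d j = (1 - \<epsilon>) * (1 + cos (real j * pi / real d)) / 2"

lemma cheb_node_bounds:
  assumes "\<epsilon> < 1"
  shows "0 \<le> cheb_node \<epsilon> d j" "cheb_node \<epsilon> d j \<le> 1 - \<epsilon>"
proof -
  define y where "y = 1 + cos (real j * pi / real d)"
  have "0 \<le> y" "y \<le> 2"
    using cos_ge_minus_one[of "real j * pi / real d"] cos_le_one[of "real j * pi / real d"]
    unfolding y_def by linarith+
  with assms have "0 \<le> (1 - \<epsilon>) * y" "(1 - \<epsilon>) * y \<le> (1 - \<epsilon>) * 2"
    by (intro mult_nonneg_nonneg mult_left_mono; simp)+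
  then show "0 \<le> cheb_node \<epsilon> d j" "cheb_node \<epsilon> d j \<le> 1 - \<epsilon>"
    unfolding cheb_node_def y_def[symmetric] by simp_all
qed

lemma strict_antimono_cheb_node:
  assumes "\<epsilon> < 1"
  shows "strict_antimono_on {0..d} (cheb_node \<epsilon> d)"
proof (rule monotone_onI)
  fix i j assume "i \<in> {0..d}" "j \<in> {0..d}" "i < j"
  then have "real i * pi / real d < real j * pi / real d" "real j * pi / real d \<le> pi"
    by (simp_all add: divide_strict_right_mono field_simps)
  then have "cos (real j * pi / real d) < cos (real i * pi / real d)"
    by (subst cos_mono_less_eq) auto
  with assms show "cheb_node \<epsilon> d j < cheb_node \<epsilon> d i"
    unfolding cheb_node_def by (simp add: divide_strict_right_mono)
qed

lemma poly_cheb_poly_at_cheb_node: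
  assumes "\<epsilon> < 1" "j \<le> d"
  shows "poly (cheb_poly d \<circ>\<^sub>p [:-1, 2 / (1 - \<epsilon>):]) (cheb_node \<epsilon> d j) = (-1) ^ j"
proof -
  have "poly [:-1, 2 / (1 - \<epsilon>):] (cheb_node \<epsilon> d j) = cos (real j * pi / real d)"
    using assms(1) by (simp add: cheb_node_def field_simps)
  then have "poly (cheb_poly d \<circ>\<^sub>p [:-1, 2 / (1 - \<epsilon>):]) (cheb_node \<epsilon> d j) = cos (real j * pi)"
    using assms(2) by (cases "d = 0") (simp_all add: poly_pcompose poly_cheb_poly_cos)
  then show ?thesis
    by simp
qed

lemma arcosh_real_le:
  fixes x :: real
  assumes "1 \<le> x"
  shows "arcosh x \<le> (x - 1) + sqrt (x\<^sup>2 - 1)"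
proof -
  have "0 < x + sqrt (x\<^sup>2 - 1)"
    using assms by (simp add: add_pos_nonneg one_le_power)
  then have "ln (x + sqrt (x\<^sup>2 - 1)) \<le> (x - 1) + sqrt (x\<^sup>2 - 1)"
    using ln_le_minus_one by fastforce
  with assms show ?thesis
    by (simp add: arcosh_real_def)
qed

lemma exp_le_two_powr: "exp t \<le> 2 powr (2 * t)" if "0 \<le> t" for t :: real
proof -
  have "exp t = exp 1 powr t"
    by (simp add: powr_def)
  also have "\<dots> \<le> 4 powr t"
    using exp_le that by (intro powr_mono2) auto
  also have "\<dots> = (2 powr 2) powr t"
    by simp
  also have "\<dots> = 2 powr (2 * t)"
    by (rule powr_powr)
  finally show ?thesis .
qed

lemma arcosh_near_one_le:
  assumes "0 < \<epsilon>" "\<epsilon> < 1/2"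
  shows "arcosh (2 / (1 - \<epsilon>) - 1) \<le> 8 * sqrt \<epsilon>"
proof -
  define x where "x = 2 / (1 - \<epsilon>) - 1"
  have x: "1 \<le> x" "x - 1 \<le> 4 * \<epsilon>" "x + 1 \<le> 4"
    using assms by (simp_all add: x_def field_simps)
  have "x\<^sup>2 - 1 = (x - 1) * (x + 1)"
    by (simp add: power2_eq_square algebra_simps)
  also have "\<dots> \<le> (4 * \<epsilon>) * 4"
    using x by (intro mult_mono) auto
  finally have "sqrt (x\<^sup>2 - 1) \<le> sqrt (4\<^sup>2 * \<epsilon>)"
    by (simp add: mult.commute)
  also have "\<dots> = 4 * sqrt \<epsilon>"
    by (simp add: real_sqrt_mult)
  finally have "sqrt (x\<^sup>2 - 1) \<le> 4 * sqrt \<epsilon>" .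
  moreover have "\<epsilon> \<le> sqrt \<epsilon>"
    using assms by (simp add: real_le_rsqrt power2_eq_square)
  ultimately show ?thesis
    using arcosh_real_le[OF x(1)] x(2) unfolding x_def by linarith
qed

lemma poly_cheb_poly_near_one_le:
  assumes "0 < \<epsilon>" "\<epsilon> < 1/2"
  shows "poly (cheb_poly d) (2 / (1 - \<epsilon>) - 1) \<le> 2 powr (16 * real d * sqrt \<epsilon>)"
proof -
  have "1 \<le> 2 / (1 - \<epsilon>) - 1"
    using assms by (simp add: field_simps)
  then have "poly (cheb_poly d) (2 / (1 - \<epsilon>) - 1) \<le> exp (real d * arcosh (2 / (1 - \<epsilon>) - 1))"
    by (rule poly_cheb_poly_le_exp_arcosh)
  also have "\<dots> \<le> exp (8 * real d * sqrt \<epsilon>)"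
    using mult_left_mono[OF arcosh_near_one_le[OF assms], of "real d"] by (simp add: mult_ac)
  also have "\<dots> \<le> 2 powr (16 * real d * sqrt \<epsilon>)"
    using exp_le_two_powr[of "8 * real d * sqrt \<epsilon>"] assms by (simp add: mult_ac)
  finally show ?thesis .
qed

lemma cheb_node_weights:
  fixes d :: nat and \<epsilon> :: real
  assumes "0 < \<epsilon>" "\<epsilon> < 1/2"
  defines "\<rho> \<equiv> cheb_node \<epsilon> d" and "c \<equiv> lagrange_basis (cheb_node \<epsilon> d) {0..d} 1"
  shows "\<forall>j\<in>{0..d}. 0 \<le> \<rho> j \<and> \<rho> j \<le> 1 - \<epsilon>"
    and "\<forall>k \<le> d. (\<Sum>j=0..d. c j * \<rho> j ^ k) = 1"
    and "\<forall>k \<ge> d + 1. 0 \<le> (\<Sum>j=0..d. c j * \<rho> j ^ k) \<and> (\<Sum>j=0..d. c j * \<rho> j ^ k) \<le> 1"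
    and "(\<Sum>j=0..d. \<bar>c j\<bar>) \<le> 2 powr (16 * real d * sqrt \<epsilon>)"
proof -
  have "\<epsilon> < 1"
    using assms(2) by simp
  then have decr: "strict_antimono_on {0..d} \<rho>" and inj: "inj_on \<rho> {0..d}"
    using strict_antimono_cheb_node strict_antimono_iff_antimono by (auto simp: \<rho>_def)
  have bounds: "0 \<le> \<rho> j" "\<rho> j \<le> 1 - \<epsilon>" for j
    using cheb_node_bounds[OF \<open>\<epsilon> < 1\<close>] by (simp_all add: \<rho>_def)
  then show "\<forall>j\<in>{0..d}. 0 \<le> \<rho> j \<and> \<rho> j \<le> 1 - \<epsilon>"
    by simp
  show "\<forall>k \<le> d. (\<Sum>j=0..d. c j * \<rho> j ^ k) = 1"
    using lagrange_interpolation_power[OF _ inj, of _ 1] by (simp add: c_def \<rho>_def)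
  show "\<forall>k \<ge> d + 1. 0 \<le> (\<Sum>j=0..d. c j * \<rho> j ^ k) \<and> (\<Sum>j=0..d. c j * \<rho> j ^ k) \<le> 1"
  proof (intro allI impI)
    fix k assume "k \<ge> d + 1"
    moreover have "\<rho> i < 1" for i
      using bounds(2)[of i] assms(1) by linarith
    ultimately show "0 \<le> (\<Sum>j=0..d. c j * \<rho> j ^ k) \<and> (\<Sum>j=0..d. c j * \<rho> j ^ k) \<le> 1"
      using lagrange_moments_at_one_bounded[of "{0..d}" \<rho> k] inj bounds(1) by (simp add: c_def \<rho>_def)
  qed
  have "(\<Sum>j=0..d. \<bar>c j\<bar>) = poly (cheb_poly d \<circ>\<^sub>p [:-1, 2 / (1 - \<epsilon>):]) 1"
    unfolding c_def using decr bounds(2)[of 0] assms(1) \<open>\<epsilon> < 1\<close> degree_cheb_poly[of d]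
    by (intro sum_abs_lagrange_basis) (auto simp: \<rho>_def poly_cheb_poly_at_cheb_node degree_pcompose)
  also have "\<dots> \<le> 2 powr (16 * real d * sqrt \<epsilon>)"
    using poly_cheb_poly_near_one_le[OF assms(1,2)] by (simp add: poly_pcompose)
  finally show "(\<Sum>j=0..d. \<bar>c j\<bar>) \<le> 2 powr (16 * real d * sqrt \<epsilon>)" .
qed

theorem lemma4p13:
  "\<exists>C::real. C > 0 \<and>
     (\<forall>(d::nat) (\<epsilon>::real). 0 < \<epsilon> \<and> \<epsilon> < 1/2 \<longrightarrow>
       (\<exists>(\<rho>::nat \<Rightarrow> real) (c::nat \<Rightarrow> real).
          (\<forall>j\<in>{0..d}. 0 \<le> \<rho> j \<and> \<rho> j \<le> 1 - \<epsilon>) \<and>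
          (\<forall>k::nat. k \<le> d \<longrightarrow> (\<Sum>j=0..d. c j * \<rho> j ^ k) = 1) \<and>
          (\<forall>k::nat. k \<ge> d + 1 \<longrightarrow>
             0 \<le> (\<Sum>j=0..d. c j * \<rho> j ^ k) \<and> (\<Sum>j=0..d. c j * \<rho> j ^ k) \<le> 1) \<and>
          (\<Sum>j=0..d. \<bar>c j\<bar>) \<le> 2 powr (C * real d * sqrt \<epsilon>)))"
  by (intro exI[of _ 16] conjI allI impI) (simp, use cheb_node_weights in blast)

end
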